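(* Let $n,m\in\mathbb{N}$ and $\varrho:\mathbb{C}\to\mathbb{C}$. Then $\mathcal{SN}^\varrho_{n,m}\subseteq\mathcal{I}^\varrho_{n,m,n+m+1}$.
   Context: $\mathcal{SN}^\varrho_{n,m}$ denotes the set of shallow complex-valued neural networks, i.e. functions $V_2\circ\varrho^{\times N}\circ V_1:\mathbb{C}^n\to\mathbb{C}^m$ with arbitrary $N\in\mathbb{N}$, $\mathbb{C}$-affine maps $V_1:\mathbb{C}^n\to\mathbb{C}^N$, $V_2:\mathbb{C}^N\to\mathbb{C}^m$ (maps $z\mapsto Az+b$ with complex $A,b$), and $\varrho^{\times N}$ the componentwise application of $\varrho$. $\mathcal{I}^\varrho_{n,m,n+m+1}$ denotes the set of register models, i.e. functions $T_L\circ\tilde\varrho\circ T_{L-1}\circ\cdots\circ\tilde\varrho\circ T_1$ with arbitrary $L\ge2$, $\mathbb{C}$-affine $T_1:\mathbb{C}^n\to\mathbb{C}^{n+m+1}$, $T_L:\mathbb{C}^{n+m+1}\to\mathbb{C}^m$, $T_\ell:\mathbb{C}^{n+m+1}\to\mathbb{C}^{n+m+1}$ for $2\le\ell\le L-1$, where $\tilde\varrho:\mathbb{C}^{n+m+1}\to\mathbb{C}^{n+m+1}$ applies $\varrho$ to exactly one fixed coordinate (the $(n+1)$-th) and the identity to all other coordinates. *)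

theory Defs
  imports "HOL-Analysis.Analysis" "HOL-Library.FuncSet"
begin

text \<open>Vectors of C^k are represented as functions nat => complex vanishing at
indices >= k (coordinates are 0-indexed). A function C^n -> C^m is represented
by its restriction (FuncSet.restrict) to cvec n.\<close>

definition cvec :: "nat \<Rightarrow> (nat \<Rightarrow> complex) set" where
  "cvec k = {x. \<forall>i\<ge>k. x i = 0}"

definition caffine :: "nat \<Rightarrow> nat \<Rightarrow> (nat \<Rightarrow> nat \<Rightarrow> complex) \<Rightarrow> (nat \<Rightarrow> complex)
    \<Rightarrow> (nat \<Rightarrow> complex) \<Rightarrow> (nat \<Rightarrow> complex)" where
  "caffine a b A c = (\<lambda>x i. if i < b then (\<Sum>j<a. A i j * x j) + c i else 0)"

definition cwise :: "nat \<Rightarrow> (complex \<Rightarrow> complex) \<Rightarrow> (nat \<Rightarrow> complex) \<Rightarrow> (nat \<Rightarrow> complex)" where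
  "cwise N \<rho> = (\<lambda>x i. if i < N then \<rho> (x i) else 0)"

definition one_coord :: "nat \<Rightarrow> (complex \<Rightarrow> complex) \<Rightarrow> (nat \<Rightarrow> complex) \<Rightarrow> (nat \<Rightarrow> complex)" where
  "one_coord k \<rho> = (\<lambda>x i. if i = k then \<rho> (x i) else x i)"

definition SN :: "(complex \<Rightarrow> complex) \<Rightarrow> nat \<Rightarrow> nat \<Rightarrow> ((nat \<Rightarrow> complex) \<Rightarrow> (nat \<Rightarrow> complex)) set" where
  "SN \<rho> n m = {restrict (caffine N m A2 c2 \<circ> cwise N \<rho> \<circ> caffine n N A1 c1) (cvec n)
                 | N A1 c1 A2 c2. True}"

text \<open>Register models I^rho_{n,m,d}: T_L o rt o T_(L-1) o ... o rt o T_1, where the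
list ts contains the middle maps T_2,...,T_(L-1) (so L = length ts + 2 >= 2) and rt
applies rho to the (n+1)-th coordinate (0-based index n).\<close>
definition register :: "(complex \<Rightarrow> complex) \<Rightarrow> nat \<Rightarrow> nat \<Rightarrow> nat
    \<Rightarrow> ((nat \<Rightarrow> complex) \<Rightarrow> (nat \<Rightarrow> complex)) set" where
  "register \<rho> n m d = {restrict
      (caffine d m AL cL \<circ> one_coord n \<rho> \<circ>
        fold (\<lambda>(A, c) g. caffine d d A c \<circ> one_coord n \<rho> \<circ> g) ts (caffine n d A1 c1))
      (cvec n)
    | A1 c1 ts AL cL. True}"

end

theory Submission
  imports Defs
begin

text \<open>A shallow network with \<open>N\<close> neurons is simulated neuron by neuron on the registers
\<open>x\<^sub>1, \<dots>, x\<^sub>n, w, s\<^sub>1, \<dots>, s\<^sub>m\<close>: the inputs are copied through unchanged, the work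
register \<open>w\<close> holds the pre-activation of the current neuron, and after \<open>\<rho>\<close> has been applied
to \<open>w\<close> the next affine layer adds the neuron's contribution to the accumulators \<open>s\<^sub>i\<close> and
loads the pre-activation of the next neuron into \<open>w\<close>. After \<open>N\<close> neurons the readout projects
onto the accumulators and adds the output bias.\<close>

lemma sum_lessThan_if_less:
  fixes f :: "nat \<Rightarrow> 'a::comm_monoid_add"
  assumes "n \<le> d"
  shows "(\<Sum>j<d. if j < n then f j else 0) = (\<Sum>j<n. f j)"
proof -
  have "(\<Sum>j<d. if j < n then f j else 0) = (\<Sum>j\<in>{..<d} \<inter> {j. j < n}. f j)"
    by (simp add: sum.inter_restrict)
  also have "{..<d} \<inter> {j. j < n} = {..<n}"
    using assms by auto
  finally show ?thesis .
qed

lemma sum_lessThan_delta_mult: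
  fixes f :: "nat \<Rightarrow> 'a::semiring_1"
  shows "(\<Sum>j<d. (if j = i then 1 else 0) * f j) = (if i < d then f i else 0)"
  by (simp add: of_bool_def[symmetric])

lemma fold_register_layers:
  assumes "\<And>x. T x = S x 0"
    and "\<And>k x. caffine d d (B k) (e k) (one_coord n \<rho> (S x k)) = S x (Suc k)"
  shows "fold (\<lambda>(A, c) g. caffine d d A c \<circ> one_coord n \<rho> \<circ> g) (map (\<lambda>k. (B k, e k)) [0..<K]) T x
    = S x K"
  by (induction K) (simp_all add: assms)

context
  fixes n m :: nat and \<rho> :: "complex \<Rightarrow> complex"
    and A1 :: "nat \<Rightarrow> nat \<Rightarrow> complex" and c1 :: "nat \<Rightarrow> complex"
    and A2 :: "nat \<Rightarrow> nat \<Rightarrow> complex"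
begin

text \<open>Deliberately not cut off at the number of neurons: this keeps the loading step free of
case distinctions, and only the first \<open>N\<close> values are ever read out.\<close>
definition preactivation :: "(nat \<Rightarrow> complex) \<Rightarrow> nat \<Rightarrow> complex" where
  "preactivation x k = (\<Sum>j<n. A1 k j * x j) + c1 k"

definition register_state :: "(nat \<Rightarrow> complex) \<Rightarrow> nat \<Rightarrow> nat \<Rightarrow> complex" where
  "register_state x k i =
    (if i < n then x i
     else if i = n then preactivation x k
     else if i \<le> n + m then (\<Sum>j<k. A2 (i - n - 1) j * \<rho> (preactivation x j))
     else 0)"

definition load_matrix :: "nat \<Rightarrow> nat \<Rightarrow> complex" where
  "load_matrix i j = (if i < n then (if j = i then 1 else 0) else if i = n then A1 0 j else 0)"

definition load_offset :: "nat \<Rightarrow> complex" where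
  "load_offset i = (if i = n then c1 0 else 0)"

definition step_matrix :: "nat \<Rightarrow> nat \<Rightarrow> nat \<Rightarrow> complex" where
  "step_matrix k i j =
    (if i < n then (if j = i then 1 else 0)
     else if i = n then (if j < n then A1 (Suc k) j else 0)
     else (if j = i then 1 else 0) + (if j = n then A2 (i - n - 1) k else 0))"

definition step_offset :: "nat \<Rightarrow> nat \<Rightarrow> complex" where
  "step_offset k i = (if i = n then c1 (Suc k) else 0)"

definition readout_matrix :: "nat \<Rightarrow> nat \<Rightarrow> complex" where
  "readout_matrix i j = (if j = n + 1 + i then 1 else 0)"

lemma caffine_load_matrix:
  "caffine n (n + m + 1) load_matrix load_offset x = register_state x 0"
proof
  fix i
  have "(\<Sum>j<n. load_matrix i j * x j) = (\<Sum>j<n. (if j = i then 1 else 0) * x j)" if "i < n"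
    using that by (intro sum.cong) (auto simp: load_matrix_def)
  then show "caffine n (n + m + 1) load_matrix load_offset x i = register_state x 0 i"
    by (auto simp: caffine_def register_state_def load_matrix_def load_offset_def
        preactivation_def sum_lessThan_delta_mult)
qed

lemma caffine_step_matrix:
  "caffine (n + m + 1) (n + m + 1) (step_matrix k) (step_offset k)
     (one_coord n \<rho> (register_state x k))
   = register_state x (Suc k)"
  (is "caffine ?d ?d _ _ ?y = _")
proof
  fix i
  have y_input: "?y j = x j" if "j < n" for j
    using that by (simp add: one_coord_def register_state_def)
  have y_work: "?y n = \<rho> (preactivation x k)"
    by (simp add: one_coord_def register_state_def)
  have row: "(\<Sum>j<?d. step_matrix k i j * ?y j) =
      (if i < n then x i
       else if i = n then (\<Sum>j<n. A1 (Suc k) j * x j)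
       else (if i < ?d then ?y i else 0) + A2 (i - n - 1) k * \<rho> (preactivation x k))"
  proof -
    consider "i < n" | "i = n" | "n < i"
      by linarith
    then show ?thesis
    proof cases
      case 1
      then have "(\<Sum>j<?d. step_matrix k i j * ?y j) = (\<Sum>j<?d. (if j = i then 1 else 0) * ?y j)"
        by (intro sum.cong) (auto simp: step_matrix_def)
      with 1 show ?thesis
        by (simp add: sum_lessThan_delta_mult y_input)
    next
      case 2
      have "(\<Sum>j<?d. step_matrix k i j * ?y j) = (\<Sum>j<?d. if j < n then A1 (Suc k) j * x j else 0)"
        using 2 by (intro sum.cong) (auto simp: step_matrix_def y_input)
      with 2 show ?thesis
        by (simp add: sum_lessThan_if_less)
    next
      case 3
      then have "(\<Sum>j<?d. step_matrix k i j * ?y j) =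
          (\<Sum>j<?d. (if j = i then 1 else 0) * ?y j + (if j = n then 1 else 0) * (A2 (i - n - 1) k * ?y j))"
        by (intro sum.cong) (auto simp: step_matrix_def)
      with 3 show ?thesis
        by (simp add: sum.distrib sum_lessThan_delta_mult y_work)
    qed
  qed
  show "caffine ?d ?d (step_matrix k) (step_offset k) ?y i = register_state x (Suc k) i"
    unfolding caffine_def row
    by (simp add: step_offset_def register_state_def one_coord_def preactivation_def y_work)
qed

lemma caffine_readout_matrix:
  "caffine (n + m + 1) m readout_matrix c2 (one_coord n \<rho> (register_state x N))
   = (caffine N m A2 c2 \<circ> cwise N \<rho> \<circ> caffine n N A1 c1) x"
proof
  fix i
  have "(\<Sum>j<N. A2 i j * cwise N \<rho> (caffine n N A1 c1 x) j) = (\<Sum>j<N. A2 i j * \<rho> (preactivation x j))"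
    by (intro sum.cong) (auto simp: cwise_def caffine_def preactivation_def)
  then show "caffine (n + m + 1) m readout_matrix c2 (one_coord n \<rho> (register_state x N)) i
      = (caffine N m A2 c2 \<circ> cwise N \<rho> \<circ> caffine n N A1 c1) x i"
    by (simp add: caffine_def readout_matrix_def sum_lessThan_delta_mult one_coord_def
        register_state_def)
qed

end

theorem proposition3p4:
  fixes n m :: nat and \<rho> :: "complex \<Rightarrow> complex"
  shows "SN \<rho> n m \<subseteq> register \<rho> n m (n + m + 1)"
proof
  fix f assume "f \<in> SN \<rho> n m"
  then obtain N A1 c1 A2 c2 where f:
    "f = restrict (caffine N m A2 c2 \<circ> cwise N \<rho> \<circ> caffine n N A1 c1) (cvec n)"
    by (auto simp: SN_def)
  let ?d = "n + m + 1"
  let ?layers = "map (\<lambda>k. (step_matrix n A1 A2 k, step_offset n c1 k)) [0..<N]"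
  have hidden_layers: "\<And>x. fold (\<lambda>(A, c) g. caffine ?d ?d A c \<circ> one_coord n \<rho> \<circ> g) ?layers
      (caffine n ?d (load_matrix n A1) (load_offset n c1)) x = register_state n m \<rho> A1 c1 A2 x N"
    by (rule fold_register_layers) (rule caffine_load_matrix caffine_step_matrix)+
  have "f = restrict (caffine ?d m (readout_matrix n) c2 \<circ> one_coord n \<rho> \<circ>
      fold (\<lambda>(A, c) g. caffine ?d ?d A c \<circ> one_coord n \<rho> \<circ> g) ?layers
        (caffine n ?d (load_matrix n A1) (load_offset n c1))) (cvec n)"
    unfolding f
    by (intro restrict_ext) (simp only: comp_apply hidden_layers caffine_readout_matrix[unfolded comp_apply])
  then show "f \<in> register \<rho> n m ?d"
    unfolding register_def by blast
qed

end
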